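(* Let $\Xi$ be a finite measure on $\Delta$ and consider the $\Xi$-coalescent. This coalescent is symmetric if and only if there exists a measure $F$ on $\mathbb{Z}_+=\{0,1,2,\dots\}$ such that $$F(0)<\infty\quad\text{and}\quad \sum_{k\ge 1}\frac{F(k)}{k}<\infty,$$ and such that $\Xi$ puts no mass outside $\Delta^{sym}$ and $$\Xi(\{\xi^k\})=\frac{F(k)}{k}\ \ (k\in\mathbb{N}),\qquad \Xi(\{\xi^0\})=F(0).$$
   Context: Let $\Delta=\{\zeta=(\zeta_1,\zeta_2,\dots):\zeta_1\ge\zeta_2\ge\dots\ge0,\ \sum_i\zeta_i\le1\}$, $(\zeta,\zeta):=\sum_{i\ge1}\zeta_i^2$ and $\zeta_0:=1-\sum_{i\ge1}\zeta_i$. For a finite measure $\Xi$ on $\Delta$ write $\Xi=a\delta_{(0,0,\dots)}+\Xi^0$ with $a\ge0$ and $\Xi^0(\{(0,0,\dots)\})=0$. The $\Xi$-coalescent is the exchangeable Markov process with values in partitions of $\mathbb{N}$ (its restrictions to $[n]=\{1,\dots,n\}$ are Markov chains) in which, whenever there are $b$ blocks, each particular collision in which $r$ disjoint groups of the current blocks, of sizes $k_1,\dots,k_r\ge2$, merge (each group into a single block) while the remaining $s=b-\sum_ik_i$ blocks stay unchanged, occurs at rate $$\lambda_{b,(k_1,\dots,k_r),s}=a\,\mathbf 1_{\{r=1,k_1=2\}}+\int_\Delta\sum_{l=0}^s\binom{s}{l}\zeta_0^{\,s-l}\sum_{i_1,\dots,i_{r+l}\ \text{distinct}}\zeta_{i_1}^{k_1}\cdots\zeta_{i_r}^{k_r}\zeta_{i_{r+1}}\cdots\zeta_{i_{r+l}}\frac{\Xi^0(d\zeta)}{(\zeta,\zeta)}.$$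 For positive integers $k_1,\dots,k_r$ with $\sum_ik_i=b$ and at least one $k_i\ge2$, write $\lambda_{b,(k_1,\dots,k_r)}:=\lambda_{b,(k_i:\,k_i\ge2),s}$ with $s=\#\{i:k_i=1\}$; this is the rate of a given merger of $b$ blocks into $r$ blocks containing respectively $k_1,\dots,k_r$ of the original blocks (the order of the $k_i$ is irrelevant). A coalescent is called symmetric if for every $b>1$, every $2\le r<b$ and all positive integers $k_1,\dots,k_r$ and $k_1',\dots,k_r'$ with $\sum_ik_i=\sum_ik_i'=b$, one has $\lambda_{b,(k_1,\dots,k_r)}=\lambda_{b,(k_1',\dots,k_r')}$. Let $\xi^0=(0,0,\dots)$, for $k\in\mathbb{N}$ let $\xi^k=(1/k,\dots,1/k,0,0,\dots)$ ($k$ entries equal to $1/k$), and $\Delta^{sym}=\{\xi^k:k\in\mathbb{Z}_+\}$. *)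

theory Defs
  imports "HOL-Probability.Probability"
begin

text \<open>Mass partitions. A point zeta of Delta is a sequence zeta :: nat => real, where
  zeta i (i = 0,1,2,...) stands for the paper's zeta_(i+1).\<close>

definition Delta :: "(nat \<Rightarrow> real) set" where
  "Delta = {\<zeta>. (\<forall>i. 0 \<le> \<zeta> i) \<and> (\<forall>i. \<zeta> (Suc i) \<le> \<zeta> i) \<and> summable \<zeta> \<and> (\<Sum>i. \<zeta> i) \<le> 1}"

definition dust :: "(nat \<Rightarrow> real) \<Rightarrow> real" where
  "dust \<zeta> = 1 - (\<Sum>i. \<zeta> i)"

definition sqnorm :: "(nat \<Rightarrow> real) \<Rightarrow> real" where
  "sqnorm \<zeta> = (\<Sum>i. (\<zeta> i)\<^sup>2)"

definition distinct_sum :: "(nat \<Rightarrow> real) \<Rightarrow> nat list \<Rightarrow> nat \<Rightarrow> ennreal" where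
  "distinct_sum \<zeta> ks l =
     (\<integral>\<^sup>+ is. ennreal ((\<Prod>j<length ks. \<zeta> (is ! j) ^ (ks ! j)) *
                        (\<Prod>j\<in>{length ks..<length ks + l}. \<zeta> (is ! j)))
        \<partial>count_space {is. length is = length ks + l \<and> distinct is})"

text \<open>The rate lambda_(b,(k_1,...,k_r),s) with b = k_1+...+k_r+s, where ks = [k_1,...,k_r]
  (all k_i >= 2) and Xi is a finite measure on Delta (a measure on nat => real carried by Delta).
  a = Xi({0}) and Xi^0 = restriction of Xi to the complement of {0}.\<close>
definition rate :: "(nat \<Rightarrow> real) measure \<Rightarrow> nat list \<Rightarrow> nat \<Rightarrow> ennreal" where
  "rate \<Xi> ks s =
     emeasure \<Xi> {(\<lambda>_. 0)} * (if ks = [2] then 1 else 0) +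
     (\<integral>\<^sup>+ \<zeta> \<in> (UNIV - {(\<lambda>_. 0)}).
        (\<Sum>l\<le>s. ennreal (real (s choose l) * dust \<zeta> ^ (s - l)) * distinct_sum \<zeta> ks l)
          / ennreal (sqnorm \<zeta>) \<partial>\<Xi>)"

text \<open>lambda_(b,(k_1,...,k_r)) for positive k_i: the blocks of size >= 2 form the merging
  groups, s = number of k_i equal to 1.\<close>
definition merger_rate :: "(nat \<Rightarrow> real) measure \<Rightarrow> nat list \<Rightarrow> ennreal" where
  "merger_rate \<Xi> ks = rate \<Xi> (filter (\<lambda>k. 2 \<le> k) ks) (length (filter (\<lambda>k. k = 1) ks))"

definition symmetric_coalescent :: "(nat \<Rightarrow> real) measure \<Rightarrow> bool" where
  "symmetric_coalescent \<Xi> \<longleftrightarrow>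
     (\<forall>b r ks ks'. 1 < b \<longrightarrow> 2 \<le> r \<longrightarrow> r < b \<longrightarrow>
        length ks = r \<longrightarrow> length ks' = r \<longrightarrow>
        (\<forall>k\<in>set ks. 0 < k) \<longrightarrow> (\<forall>k\<in>set ks'. 0 < k) \<longrightarrow>
        sum_list ks = b \<longrightarrow> sum_list ks' = b \<longrightarrow>
        merger_rate \<Xi> ks = merger_rate \<Xi> ks')"

definition xi :: "nat \<Rightarrow> nat \<Rightarrow> real" where
  "xi k = (\<lambda>i. if i < k then 1 / real k else 0)"

definition Delta_sym :: "(nat \<Rightarrow> real) set" where
  "Delta_sym = range xi"

end

theory Submission imports Defs begin

text \<open>Write \<open>p\<^sub>n = \<Sum>i. \<zeta> i ^ n\<close>. Away from \<open>\<zeta> = 0\<close>, the rates of the mergers (3,1) and (2,2)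
  of four blocks have densities \<open>(p\<^sub>3 - p\<^sub>4) / p\<^sub>2\<close> and \<open>(p\<^sub>2\<^sup>2 - p\<^sub>4) / p\<^sub>2\<close> with respect to
  \<open>\<Xi>\<close>, and the Kingman component contributes to neither. Their difference \<open>(p\<^sub>3 - p\<^sub>2\<^sup>2) / p\<^sub>2\<close>
  is nonnegative on \<open>Delta\<close>, because
  \<open>0 \<le> (\<Sum>i. \<zeta> i * (\<zeta> i - p\<^sub>2)\<^sup>2) = p\<^sub>3 - 2 p\<^sub>2\<^sup>2 + p\<^sub>2\<^sup>2 (\<Sum>i. \<zeta> i) \<le> p\<^sub>3 - p\<^sub>2\<^sup>2\<close>,
  and it vanishes only if every \<open>\<zeta> i\<close> is \<open>0\<close> or \<open>p\<^sub>2\<close> and \<open>\<Sum>i. \<zeta> i = 1\<close>, i.e. \<open>\<zeta> = xi k\<close>.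
  So symmetry forces \<open>\<Xi>\<close> to be carried by \<open>Delta_sym\<close>. Conversely, \<open>xi k\<close> has no dust, and
  there a merger of \<open>b\<close> blocks into \<open>r\<close> has density \<open>k ^ (1 - b)\<close> times the number of injections
  of \<open>r\<close> indices into \<open>{..<k}\<close>, which depends on \<open>b\<close> and \<open>r\<close> only. The measure \<open>F\<close> is
  \<open>F {k} = k * \<Xi> {xi k}\<close>, \<open>F {0} = \<Xi> {xi 0}\<close>; it has the required finiteness since \<open>\<Xi>\<close> is
  finite.\<close>

lemma term_le_suminf:
  fixes f :: "nat \<Rightarrow> real"
  assumes "summable f" "\<And>i. 0 \<le> f i"
  shows "f n \<le> suminf f"
  using sum_le_suminf[OF assms(1), of "{n}"] assms(2) by simp

lemma suminf_ennreal_off_diagonal: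
  fixes h :: "nat \<Rightarrow> real"
  assumes "\<And>i. 0 \<le> h i" "0 \<le> c" "summable h"
  shows "(\<Sum>j. ennreal (c * h j) * indicator {(i, j). i \<noteq> j} (i0, j)) = ennreal (c * (suminf h - h i0))"
proof -
  have "(\<lambda>j. c * h j - (if j = i0 then c * h j else 0)) sums (c * suminf h - c * h i0)"
    using assms(3) by (intro sums_diff sums_mult summable_sums sums_single)
  moreover have "(\<lambda>j. ennreal (c * h j) * indicator {(i, j). i \<noteq> j} (i0, j))
      = (\<lambda>j. ennreal (c * h j - (if j = i0 then c * h j else 0)))"
    by (auto simp: indicator_def)
  ultimately show ?thesis
    using assms(1,2) by (simp add: suminf_ennreal2 sums_summable sums_unique[symmetric] algebra_simps)
qed

lemma nn_integral_distinct_pairs: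
  fixes g h :: "nat \<Rightarrow> real"
  assumes g0: "\<And>i. 0 \<le> g i" and h0: "\<And>i. 0 \<le> h i" and h1: "\<And>i. h i \<le> 1"
    and sg: "summable g" and sh: "summable h"
  shows "(\<integral>\<^sup>+ is. ennreal (g (is!0) * h (is!1)) \<partial>count_space {is. length is = 2 \<and> distinct is})
        = ennreal (suminf g * suminf h - (\<Sum>i. g i * h i))"
proof -
  let ?D = "{(i::nat, j). i \<noteq> j}"
  have bij: "bij_betw (\<lambda>(i, j). [i, j]) ?D {is. length is = 2 \<and> distinct is}"
    by (rule bij_betwI[where g = "\<lambda>is. (is!0, is!1)"]) (auto simp: length_Suc_conv numeral_2_eq_2)
  have sgh: "summable (\<lambda>x. g x * h x)"
    by (rule summable_comparison_test'[OF sg]) (use g0 h0 h1 in \<open>auto intro: mult_left_le\<close>)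
  have "(\<integral>\<^sup>+ is. ennreal (g (is!0) * h (is!1)) \<partial>count_space {is. length is = 2 \<and> distinct is})
      = (\<integral>\<^sup>+ p. ennreal (g (fst p) * h (snd p)) * indicator ?D p \<partial>count_space UNIV)"
    by (subst nn_integral_bij_count_space[OF bij, symmetric], subst nn_integral_count_space_indicator)
      (auto intro!: nn_integral_cong)
  also have "\<dots> = (\<integral>\<^sup>+ x. \<integral>\<^sup>+ y. ennreal (g x * h y) * indicator ?D (x, y) \<partial>count_space UNIV \<partial>count_space UNIV)"
    by (subst nn_integral_fst_count_space[symmetric]) simp
  also have "\<dots> = (\<Sum>x. ennreal (g x * suminf h - g x * h x))"
    by (simp add: nn_integral_count_space_nat suminf_ennreal_off_diagonal h0 g0 sh right_diff_distrib)
  also have "\<dots> = ennreal (\<Sum>x. g x * suminf h - g x * h x)"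
    by (intro suminf_ennreal2 summable_diff summable_mult2 sg sgh)
      (use term_le_suminf[OF sh h0] g0 in \<open>auto simp: right_diff_distrib[symmetric]\<close>)
  also have "\<dots> = ennreal (suminf g * suminf h - (\<Sum>i. g i * h i))"
    using suminf_diff[OF summable_mult2[OF sg] sgh] suminf_mult2[OF sg] by simp
  finally show ?thesis .
qed

lemma nn_integral_singleton_lists:
  fixes g :: "nat \<Rightarrow> real"
  assumes "\<And>i. 0 \<le> g i" and "summable g"
  shows "(\<integral>\<^sup>+ is. ennreal (g (is!0)) \<partial>count_space {is. length is = 1 \<and> distinct is}) = ennreal (suminf g)"
proof -
  have bij: "bij_betw (\<lambda>i. [i]) UNIV {is. length is = 1 \<and> distinct is}"
    by (rule bij_betwI[where g = "\<lambda>is. is!0"]) (auto simp: length_Suc_conv)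
  show ?thesis
    by (subst nn_integral_bij_count_space[OF bij, symmetric])
      (simp add: nn_integral_count_space_nat suminf_ennreal2 assms)
qed

context
  fixes \<zeta> :: "nat \<Rightarrow> real"
  assumes Delta: "\<zeta> \<in> Delta"
begin

lemma Delta_nonneg: "0 \<le> \<zeta> i"
  and Delta_decseq: "decseq \<zeta>"
  and Delta_summable: "summable \<zeta>"
  and Delta_suminf_le_1: "suminf \<zeta> \<le> 1"
  using Delta by (auto simp: Delta_def intro: decseq_SucI)

lemma Delta_le_1: "\<zeta> i \<le> 1"
  using term_le_suminf[OF Delta_summable Delta_nonneg] Delta_suminf_le_1 by (rule order_trans)

lemma Delta_summable_power:
  assumes "0 < n"
  shows "summable (\<lambda>i. \<zeta> i ^ n)"
proof (rule summable_comparison_test'[OF Delta_summable])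
  fix i
  have "\<zeta> i ^ n = \<zeta> i * \<zeta> i ^ (n - 1)" using assms by (simp add: power_eq_if)
  also have "\<dots> \<le> \<zeta> i" using Delta_nonneg Delta_le_1 by (intro mult_left_le power_le_one)
  finally show "norm (\<zeta> i ^ n) \<le> \<zeta> i" using Delta_nonneg[of i] by simp
qed

lemma Delta_sum_squares_pos:
  assumes "\<zeta> \<noteq> (\<lambda>_. 0)"
  shows "0 < (\<Sum>i. \<zeta> i ^ 2)"
proof -
  obtain j where "\<zeta> j \<noteq> 0" using assms by auto
  then show ?thesis by (intro suminf_pos2[OF Delta_summable_power, of 2 j]) auto
qed

lemma Delta_sum_fourth_le_sum_cubes: "(\<Sum>i. \<zeta> i ^ 4) \<le> (\<Sum>i. \<zeta> i ^ 3) * suminf \<zeta>"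
  and Delta_sum_fourth_le_sum_squares_sq: "(\<Sum>i. \<zeta> i ^ 4) \<le> (\<Sum>i. \<zeta> i ^ 2) * (\<Sum>i. \<zeta> i ^ 2)"
  and Delta_sum_squares_le_1: "(\<Sum>i. \<zeta> i ^ 2) \<le> 1"
proof -
  have "(\<Sum>i. \<zeta> i ^ 4) \<le> (\<Sum>i. \<zeta> i ^ 3 * suminf \<zeta>)"
  proof (rule suminf_le)
    show "\<zeta> i ^ 4 \<le> \<zeta> i ^ 3 * suminf \<zeta>" for i
      using mult_left_mono[OF term_le_suminf[OF Delta_summable Delta_nonneg], of "\<zeta> i ^ 3" i]
        Delta_nonneg[of i] by (simp add: power3_eq_cube power4_eq_xxxx)
  qed (auto intro!: summable_mult2 Delta_summable_power)
  then show "(\<Sum>i. \<zeta> i ^ 4) \<le> (\<Sum>i. \<zeta> i ^ 3) * suminf \<zeta>"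
    using suminf_mult2[OF Delta_summable_power[of 3]] by simp
  have s2: "summable (\<lambda>i. \<zeta> i ^ 2)" by (rule Delta_summable_power) simp
  have "(\<Sum>i. \<zeta> i ^ 2 * \<zeta> i ^ 2) \<le> (\<Sum>i. \<zeta> i ^ 2 * (\<Sum>i. \<zeta> i ^ 2))"
    using term_le_suminf[OF s2] Delta_summable_power[of 4]
    by (intro suminf_le mult_left_mono summable_mult2 s2) auto
  then show "(\<Sum>i. \<zeta> i ^ 4) \<le> (\<Sum>i. \<zeta> i ^ 2) * (\<Sum>i. \<zeta> i ^ 2)"
    using suminf_mult2[OF s2] by (simp add: power_add[symmetric])
  have "(\<Sum>i. \<zeta> i ^ 2) \<le> suminf \<zeta>"
    using Delta_nonneg Delta_le_1
    by (intro suminf_le s2 Delta_summable) (auto simp: power2_eq_square intro: mult_left_le)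
  then show "(\<Sum>i. \<zeta> i ^ 2) \<le> 1" using Delta_suminf_le_1 by simp
qed

lemma Delta_weighted_variance_sums:
  defines "q \<equiv> \<Sum>i. \<zeta> i ^ 2"
  shows "(\<lambda>i. \<zeta> i * (\<zeta> i - q)\<^sup>2) sums ((\<Sum>i. \<zeta> i ^ 3) - 2 * q * q + q\<^sup>2 * suminf \<zeta>)"
proof -
  have "(\<lambda>i. \<zeta> i ^ 3 - 2 * q * \<zeta> i ^ 2 + q\<^sup>2 * \<zeta> i) sums ((\<Sum>i. \<zeta> i ^ 3) - 2 * q * q + q\<^sup>2 * suminf \<zeta>)"
    unfolding q_def
    by (intro sums_add sums_diff sums_mult summable_sums Delta_summable_power Delta_summable) auto
  moreover have "(\<lambda>i. \<zeta> i ^ 3 - 2 * q * \<zeta> i ^ 2 + q\<^sup>2 * \<zeta> i) = (\<lambda>i. \<zeta> i * (\<zeta> i - q)\<^sup>2)"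
    by (simp add: fun_eq_iff power2_eq_square power3_eq_cube algebra_simps)
  ultimately show ?thesis by simp
qed

lemma Delta_weighted_variance_nonneg:
  "0 \<le> (\<Sum>i. \<zeta> i ^ 3) - 2 * (\<Sum>i. \<zeta> i ^ 2) * (\<Sum>i. \<zeta> i ^ 2) + (\<Sum>i. \<zeta> i ^ 2)\<^sup>2 * suminf \<zeta>"
  using sums_le[OF _ sums_zero Delta_weighted_variance_sums] Delta_nonneg by auto

lemma Delta_sum_squares_sq_le_sum_cubes: "(\<Sum>i. \<zeta> i ^ 2)\<^sup>2 \<le> (\<Sum>i. \<zeta> i ^ 3)"
proof -
  have "(\<Sum>i. \<zeta> i ^ 2)\<^sup>2 * suminf \<zeta> \<le> (\<Sum>i. \<zeta> i ^ 2)\<^sup>2"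
    using Delta_suminf_le_1 by (simp add: mult_left_le)
  then show ?thesis using Delta_weighted_variance_nonneg by (simp add: power2_eq_square)
qed

lemma Delta_sym_if_two_valued:
  assumes vals: "\<And>i. \<zeta> i = 0 \<or> \<zeta> i = c" and "0 < c" and sum1: "suminf \<zeta> = 1"
  shows "\<zeta> \<in> Delta_sym"
proof -
  have "\<zeta> \<longlonglongrightarrow> 0" using Delta_summable by (rule summable_LIMSEQ_zero)
  then obtain N where "\<zeta> N < c" using \<open>0 < c\<close> by (metis order_tendstoD(2) eventually_sequentially order_refl)
  then have ex: "\<exists>i. \<zeta> i = 0" using vals by force
  define k where "k = (LEAST i. \<zeta> i = 0)"
  have below: "\<zeta> i = c" if "i < k" for i
    using not_less_Least[OF that[unfolded k_def]] vals[of i] by simp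
  have above: "\<zeta> i = 0" if "k \<le> i" for i
    using decseqD[OF Delta_decseq that] LeastI_ex[OF ex] Delta_nonneg[of i]
    unfolding k_def by linarith
  have "1 = (\<Sum>i<k. \<zeta> i)" using sum1 suminf_finite[of "{..<k}" \<zeta>] above by auto
  then have "real k * c = 1" using below by simp
  then have "\<zeta> = xi k"
    using below above by (cases k) (auto simp: xi_def fun_eq_iff field_simps not_less)
  then show ?thesis unfolding Delta_sym_def by auto
qed

lemma Delta_sym_if_sum_cubes_le:
  assumes "\<zeta> \<noteq> (\<lambda>_. 0)" and le: "(\<Sum>i. \<zeta> i ^ 3) \<le> (\<Sum>i. \<zeta> i ^ 2)\<^sup>2"
  shows "\<zeta> \<in> Delta_sym"
proof -
  define q where "q = (\<Sum>i. \<zeta> i ^ 2)"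
  have q0: "0 < q" unfolding q_def by (rule Delta_sum_squares_pos[OF assms(1)])
  have T: "(\<Sum>i. \<zeta> i ^ 3) - 2 * q * q + q\<^sup>2 * suminf \<zeta> = 0" and "q\<^sup>2 * 1 \<le> q\<^sup>2 * suminf \<zeta>"
    using Delta_weighted_variance_nonneg le Delta_suminf_le_1 mult_left_le[of "suminf \<zeta>" "q\<^sup>2"]
    unfolding q_def[symmetric] by (auto simp: power2_eq_square)
  then have "suminf \<zeta> = 1" using Delta_suminf_le_1 q0 by (simp add: mult_le_cancel_left)
  moreover have "\<forall>i. \<zeta> i * (\<zeta> i - q)\<^sup>2 = 0"
    using Delta_weighted_variance_sums T unfolding q_def[symmetric]
    by (subst suminf_eq_zero_iff[symmetric]) (auto simp: sums_iff Delta_nonneg)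
  then have "\<zeta> i = 0 \<or> \<zeta> i = q" for i by auto
  ultimately show ?thesis using Delta_sym_if_two_valued q0 by blast
qed

lemma distinct_sum_3_0: "distinct_sum \<zeta> [3] 0 = ennreal (\<Sum>i. \<zeta> i ^ 3)"
  unfolding distinct_sum_def
  using nn_integral_singleton_lists[of "\<lambda>i. \<zeta> i ^ 3"] Delta_nonneg Delta_summable_power[of 3] by simp

lemma distinct_sum_3_1:
  "distinct_sum \<zeta> [3] 1 = ennreal ((\<Sum>i. \<zeta> i ^ 3) * suminf \<zeta> - (\<Sum>i. \<zeta> i ^ 4))"
proof -
  have "distinct_sum \<zeta> [3] 1
      = (\<integral>\<^sup>+ is. ennreal (\<zeta> (is!0) ^ 3 * \<zeta> (is!1)) \<partial>count_space {is. length is = 2 \<and> distinct is})"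
    unfolding distinct_sum_def by (simp add: numeral_2_eq_2)
  also have "\<dots> = ennreal ((\<Sum>i. \<zeta> i ^ 3) * suminf \<zeta> - (\<Sum>i. \<zeta> i ^ 3 * \<zeta> i))"
    using Delta_nonneg Delta_le_1 Delta_summable Delta_summable_power[of 3]
    by (intro nn_integral_distinct_pairs) auto
  finally show ?thesis by (simp add: power3_eq_cube power4_eq_xxxx)
qed

lemma distinct_sum_2_2:
  "distinct_sum \<zeta> [2, 2] 0 = ennreal ((\<Sum>i. \<zeta> i ^ 2) * (\<Sum>i. \<zeta> i ^ 2) - (\<Sum>i. \<zeta> i ^ 4))"
proof -
  have "distinct_sum \<zeta> [2, 2] 0
      = (\<integral>\<^sup>+ is. ennreal (\<zeta> (is!0) ^ 2 * \<zeta> (is!1) ^ 2) \<partial>count_space {is. length is = 2 \<and> distinct is})"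
    unfolding distinct_sum_def by (simp add: numeral_2_eq_2 lessThan_Suc mult_ac)
  also have "\<dots> = ennreal ((\<Sum>i. \<zeta> i ^ 2) * (\<Sum>i. \<zeta> i ^ 2) - (\<Sum>i. \<zeta> i ^ 2 * \<zeta> i ^ 2))"
    using Delta_nonneg Delta_le_1 Delta_summable_power[of 2]
    by (intro nn_integral_distinct_pairs) (auto simp: power_le_one)
  finally show ?thesis by (simp add: power_add[symmetric])
qed

end

lemma singleton_in_borel[measurable]: "{x::nat \<Rightarrow> real} \<in> sets borel"
  by (rule borel_closed) (rule closed_singleton)

lemma Delta_eq_partial_sums:
  "Delta = {\<zeta>. (\<forall>i. 0 \<le> \<zeta> i) \<and> (\<forall>i. \<zeta> (Suc i) \<le> \<zeta> i) \<and> (\<forall>n. (\<Sum>i<n. \<zeta> i) \<le> 1)}"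
proof safe
  fix \<zeta> n assume "\<zeta> \<in> Delta"
  then show "(\<Sum>i<n. \<zeta> i) \<le> 1"
    using sum_le_suminf[OF Delta_summable, of \<zeta> "{..<n}"] Delta_nonneg Delta_suminf_le_1
    by (meson finite_lessThan order_trans)
next
  fix \<zeta> :: "nat \<Rightarrow> real" assume "\<forall>i. 0 \<le> \<zeta> i" "\<forall>i. \<zeta> (Suc i) \<le> \<zeta> i" "\<forall>n. (\<Sum>i<n. \<zeta> i) \<le> 1"
  moreover from this have "summable \<zeta>" by (intro summableI_nonneg_bounded[where x = 1]) auto
  ultimately show "\<zeta> \<in> Delta" unfolding Delta_def by (auto intro: suminf_le_const)
qed (auto simp: Delta_def)

lemma closed_Delta: "closed Delta"
  unfolding Delta_eq_partial_sums
  by (intro closed_Collect_conj closed_Collect_all closed_Collect_le continuous_on_sum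
      continuous_on_product_coordinates continuous_on_const)

lemma Delta_in_borel[measurable]: "Delta \<in> sets borel"
  by (rule borel_closed[OF closed_Delta])

lemma Delta_sym_in_borel[measurable]: "Delta_sym \<in> sets borel"
  unfolding Delta_sym_def by (rule sets.countable) (rule singleton_in_borel, simp)

definition rate_integrand :: "nat list \<Rightarrow> nat \<Rightarrow> (nat \<Rightarrow> real) \<Rightarrow> ennreal" where
  "rate_integrand ks s \<zeta> =
     (\<Sum>l\<le>s. ennreal (real (s choose l) * dust \<zeta> ^ (s - l)) * distinct_sum \<zeta> ks l) / ennreal (sqnorm \<zeta>)"

lemma rate_eq_rate_integrand:
  "rate \<Xi> ks s = emeasure \<Xi> {\<lambda>_. 0} * (if ks = [2] then 1 else 0)
     + (\<integral>\<^sup>+\<zeta>\<in>UNIV - {\<lambda>_. 0}. rate_integrand ks s \<zeta> \<partial>\<Xi>)"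
  by (simp add: rate_def rate_integrand_def)

text \<open>Going through \<open>ennreal\<close> makes \<open>moment n\<close> Borel measurable on all of \<open>nat \<Rightarrow> real\<close>;
  on \<open>Delta\<close> it is the real series.\<close>
definition moment :: "nat \<Rightarrow> (nat \<Rightarrow> real) \<Rightarrow> real" where
  "moment n \<zeta> = enn2real (\<Sum>i. ennreal (\<zeta> i ^ n))"

lemma borel_measurable_moment[measurable]: "moment n \<in> borel_measurable borel"
  unfolding moment_def by measurable

lemma moment_Delta: "\<zeta> \<in> Delta \<Longrightarrow> 0 < n \<Longrightarrow> moment n \<zeta> = (\<Sum>i. \<zeta> i ^ n)"
  unfolding moment_def using Delta_nonneg Delta_summable_power
  by (simp add: suminf_ennreal2 suminf_nonneg)

definition density_2_2 :: "(nat \<Rightarrow> real) \<Rightarrow> real" where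
  "density_2_2 \<zeta> = (moment 2 \<zeta> * moment 2 \<zeta> - moment 4 \<zeta>) / moment 2 \<zeta>"

definition density_gap :: "(nat \<Rightarrow> real) \<Rightarrow> real" where
  "density_gap \<zeta> = (moment 3 \<zeta> - moment 2 \<zeta> * moment 2 \<zeta>) / moment 2 \<zeta>"

lemma borel_measurable_density_2_2[measurable]: "density_2_2 \<in> borel_measurable borel"
  unfolding density_2_2_def by measurable

lemma borel_measurable_density_gap[measurable]: "density_gap \<in> borel_measurable borel"
  unfolding density_gap_def by measurable

context
  fixes \<zeta> :: "nat \<Rightarrow> real"
  assumes Delta: "\<zeta> \<in> Delta" and nonzero: "\<zeta> \<noteq> (\<lambda>_. 0)"
begin

lemma moment_2_pos: "0 < moment 2 \<zeta>"
  using Delta_sum_squares_pos[OF Delta nonzero] moment_Delta[OF Delta, of 2] by simp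

lemma sqnorm_eq_moment_2: "sqnorm \<zeta> = moment 2 \<zeta>"
  using moment_Delta[OF Delta, of 2] by (simp add: sqnorm_def)

lemma rate_integrand_2_2: "rate_integrand [2, 2] 0 \<zeta> = ennreal (density_2_2 \<zeta>)"
  using distinct_sum_2_2[OF Delta] moment_2_pos moment_Delta[OF Delta]
    Delta_sum_fourth_le_sum_squares_sq[OF Delta]
  by (simp add: rate_integrand_def density_2_2_def sqnorm_eq_moment_2 divide_ennreal)

lemma density_2_2_le_1: "density_2_2 \<zeta> \<le> 1"
proof -
  have "density_2_2 \<zeta> \<le> moment 2 \<zeta> * moment 2 \<zeta> / moment 2 \<zeta>"
    using moment_2_pos moment_Delta[OF Delta, of 4] Delta_nonneg[OF Delta]
      suminf_nonneg[OF Delta_summable_power[OF Delta, of 4]]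
    unfolding density_2_2_def by (intro divide_right_mono) auto
  also have "\<dots> \<le> 1"
    using moment_2_pos Delta_sum_squares_le_1[OF Delta] moment_Delta[OF Delta, of 2] by simp
  finally show ?thesis .
qed

lemma rate_integrand_3_1:
  "rate_integrand [3] 1 \<zeta> = ennreal (density_2_2 \<zeta>) + ennreal (density_gap \<zeta>)"
proof -
  define S q P3 P4 where "S = suminf \<zeta>" and "q = moment 2 \<zeta>" and "P3 = moment 3 \<zeta>" and "P4 = moment 4 \<zeta>"
  have q: "0 < q" "q = (\<Sum>i. \<zeta> i ^ 2)" using moment_2_pos moment_Delta[OF Delta] by (auto simp: q_def)
  have P: "P3 = (\<Sum>i. \<zeta> i ^ 3)" "P4 = (\<Sum>i. \<zeta> i ^ 4)" using moment_Delta[OF Delta] by (auto simp: P3_def P4_def)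
  have m: "P4 \<le> P3 * S" "P4 \<le> q * q" "q * q \<le> P3" "0 \<le> S" "S \<le> 1"
    using Delta_sum_fourth_le_sum_cubes[OF Delta] Delta_sum_fourth_le_sum_squares_sq[OF Delta]
      Delta_sum_squares_sq_le_sum_cubes[OF Delta]
      Delta_suminf_le_1[OF Delta] suminf_nonneg[OF Delta_summable[OF Delta] Delta_nonneg[OF Delta]]
    unfolding S_def q P by (auto simp: power2_eq_square)
  have "0 \<le> P3" using m(3) by (metis order_trans zero_le_square)
  have "(\<Sum>l\<le>1. ennreal (real (1 choose l) * dust \<zeta> ^ (1 - l)) * distinct_sum \<zeta> [3] l)
      = ennreal ((1 - S) * P3) + ennreal (P3 * S - P4)"
    using distinct_sum_3_0[OF Delta] distinct_sum_3_1[OF Delta] m \<open>0 \<le> P3\<close>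
    by (simp add: dust_def S_def P ennreal_mult[symmetric])
  also have "\<dots> = ennreal (P3 - P4)"
    using m mult_left_le[OF m(5) \<open>0 \<le> P3\<close>]
    by (subst ennreal_plus[symmetric]) (auto simp: algebra_simps)
  finally have "rate_integrand [3] 1 \<zeta> = ennreal ((P3 - P4) / q)"
    using m q by (simp add: rate_integrand_def sqnorm_eq_moment_2 q_def[symmetric] divide_ennreal)
  also have "\<dots> = ennreal ((q * q - P4) / q) + ennreal ((P3 - q * q) / q)"
    using m q(1) by (subst ennreal_plus[symmetric]) (auto simp: diff_divide_distrib pos_divide_le_eq pos_le_divide_eq)
  finally show ?thesis by (simp add: density_2_2_def density_gap_def q_def P3_def P4_def)
qed

lemma Delta_sym_if_density_gap_le_0:
  assumes "density_gap \<zeta> \<le> 0"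
  shows "\<zeta> \<in> Delta_sym"
proof (rule Delta_sym_if_sum_cubes_le[OF Delta nonzero])
  have "moment 3 \<zeta> \<le> moment 2 \<zeta> * moment 2 \<zeta>"
    using assms moment_2_pos by (simp add: density_gap_def divide_le_0_iff)
  then show "(\<Sum>i. \<zeta> i ^ 3) \<le> (\<Sum>i. \<zeta> i ^ 2)\<^sup>2"
    using moment_Delta[OF Delta] by (simp add: power2_eq_square)
qed

end

lemma xi_0: "xi 0 = (\<lambda>_. 0)"
  by (simp add: xi_def fun_eq_iff)

lemma inj_xi: "inj xi"
proof (rule injI, rule ccontr)
  fix a b :: nat assume "xi a = xi b" "a \<noteq> b"
  then have "xi a (min a b) = xi b (min a b)" by simp
  with \<open>a \<noteq> b\<close> show False by (auto simp: xi_def min_def split: if_splits)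
qed

definition distinct_tuples :: "nat \<Rightarrow> nat \<Rightarrow> nat list set" where
  "distinct_tuples n m = {is. length is = n \<and> distinct is \<and> set is \<subseteq> {..<m}}"

context
  fixes k :: nat
  assumes k: "0 < k"
begin

lemma dust_xi: "dust (xi k) = 0"
proof -
  have "suminf (xi k) = (\<Sum>i<k. xi k i)" by (rule suminf_finite) (auto simp: xi_def)
  then show ?thesis using k by (simp add: dust_def xi_def)
qed

lemma sqnorm_xi: "sqnorm (xi k) = 1 / real k"
proof -
  have "sqnorm (xi k) = (\<Sum>i<k. (xi k i)\<^sup>2)" unfolding sqnorm_def by (rule suminf_finite) (auto simp: xi_def)
  then show ?thesis using k by (simp add: xi_def power2_eq_square)
qed

lemma distinct_sum_xi:
  assumes pos: "\<forall>x\<in>set ks. 0 < x"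
  shows "distinct_sum (xi k) ks l
    = ennreal ((1 / real k) ^ (sum_list ks + l)) * of_nat (card (distinct_tuples (length ks + l) k))"
proof -
  let ?X = "{is. length is = length ks + l \<and> distinct is}"
  let ?T = "distinct_tuples (length ks + l) k"
  let ?c = "(1 / real k) ^ (sum_list ks + l)"
  have fin: "finite ?T"
    unfolding distinct_tuples_def
    by (rule finite_subset[OF _ finite_lists_length_eq[of "{..<k}" "length ks + l"]]) auto
  have "ennreal ((\<Prod>j<length ks. xi k (is ! j) ^ (ks ! j)) * (\<Prod>j\<in>{length ks..<length ks + l}. xi k (is ! j)))
      = ennreal ?c * indicator ?T is" if "is \<in> ?X" for "is"
  proof (cases "set is \<subseteq> {..<k}")
    case True
    then have "\<And>j. j < length is \<Longrightarrow> xi k (is ! j) = 1 / real k" by (auto simp: xi_def dest: nth_mem)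
    then have "(\<Prod>j<length ks. xi k (is ! j) ^ (ks ! j)) = (\<Prod>j<length ks. (1 / real k) ^ (ks ! j))"
      and "(\<Prod>j\<in>{length ks..<length ks + l}. xi k (is ! j)) = (1 / real k) ^ l"
      using that by (auto intro!: prod.cong)
    moreover have "(\<Prod>j<length ks. (1 / real k) ^ (ks ! j)) = (1 / real k) ^ sum_list ks"
      by (simp add: power_sum sum_list_sum_nth atLeast0LessThan)
    ultimately show ?thesis using True that by (simp add: distinct_tuples_def power_add)
  next
    case False
    then obtain j where j: "j < length is" "k \<le> is ! j" by (auto simp: subset_iff in_set_conv_nth not_less)
    then have "xi k (is ! j) = 0" by (simp add: xi_def)
    then have z: "(\<Prod>j<length ks. xi k (is ! j) ^ (ks ! j)) * (\<Prod>j\<in>{length ks..<length ks + l}. xi k (is ! j)) = 0"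
      using j that pos by (cases "j < length ks") (auto intro!: prod_zero bexI[of _ j])
    show ?thesis using False by (simp only: z) (simp add: distinct_tuples_def)
  qed
  then have "distinct_sum (xi k) ks l = (\<integral>\<^sup>+ is. ennreal ?c * indicator ?T is \<partial>count_space ?X)"
    unfolding distinct_sum_def by (intro nn_integral_cong) simp
  also have "\<dots> = ennreal ?c * emeasure (count_space ?X) ?T"
    by (rule nn_integral_cmult_indicator) (auto simp: distinct_tuples_def)
  also have "\<dots> = ennreal ?c * of_nat (card ?T)"
    using fin by (subst emeasure_count_space_finite) (auto simp: distinct_tuples_def)
  finally show ?thesis .
qed

end

lemma merging_groups_sum_length:
  assumes "\<forall>k\<in>set ks. 0 < (k::nat)"
  shows "sum_list (filter (\<lambda>k. 2 \<le> k) ks) + length (filter (\<lambda>k. k = 1) ks) = sum_list ks"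
    and "length (filter (\<lambda>k. 2 \<le> k) ks) + length (filter (\<lambda>k. k = 1) ks) = length ks"
  using assms by (induction ks) auto

lemma rate_integrand_merger_xi:
  assumes "0 < k" and pos: "\<forall>x\<in>set ks. 0 < x"
  shows "rate_integrand (filter (\<lambda>k. 2 \<le> k) ks) (length (filter (\<lambda>k. k = 1) ks)) (xi k)
    = ennreal ((1 / real k) ^ sum_list ks) * of_nat (card (distinct_tuples (length ks) k)) / ennreal (1 / real k)"
proof -
  let ?fk = "filter (\<lambda>k. 2 \<le> k) ks" and ?s = "length (filter (\<lambda>k. k = 1) ks)"
  have "(\<Sum>l\<le>?s. ennreal (real (?s choose l) * dust (xi k) ^ (?s - l)) * distinct_sum (xi k) ?fk l)
      = distinct_sum (xi k) ?fk ?s"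
    by (subst sum.remove[of _ ?s]) (auto simp: dust_xi[OF assms(1)] intro!: sum.neutral)
  then show ?thesis
    using distinct_sum_xi[OF assms(1), of ?fk ?s] merging_groups_sum_length[OF pos]
    by (simp add: rate_integrand_def sqnorm_xi[OF assms(1)])
qed

lemma filter_ge_2_eq_2_iff:
  assumes "\<forall>k\<in>set ks. 0 < (k::nat)"
  shows "filter (\<lambda>k. 2 \<le> k) ks = [2] \<longleftrightarrow> sum_list ks = length ks + 1"
proof -
  define fk where "fk = filter (\<lambda>k. 2 \<le> k) ks"
  have ge2: "\<forall>k\<in>set fk. 2 \<le> k" by (simp add: fk_def)
  then have "2 * length fk \<le> sum_list fk" by (induction fk) auto
  moreover have "sum_list ks = length ks + 1 \<longleftrightarrow> sum_list fk = length fk + 1"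
    using merging_groups_sum_length[OF assms] unfolding fk_def by linarith
  ultimately show ?thesis
    unfolding fk_def[symmetric] using ge2 by (cases fk; cases "tl fk") auto
qed

lemma emeasure_compl_eq_0_iff_AE:
  assumes "sets M = sets borel" and "A \<in> sets borel"
  shows "emeasure M (UNIV - A) = 0 \<longleftrightarrow> (AE x in M. x \<in> A)"
  using AE_iff_measurable[of "UNIV - A" M "\<lambda>x. x \<in> A"] sets_eq_imp_space_eq[OF assms(1)] assms
  by auto

lemma AE_eq_0_if_nn_integral_add_eq:
  assumes [measurable]: "f \<in> borel_measurable M" "g \<in> borel_measurable M"
    and "(\<integral>\<^sup>+x. f x \<partial>M) \<noteq> \<infinity>" and "(\<integral>\<^sup>+x. f x + g x \<partial>M) = (\<integral>\<^sup>+x. f x \<partial>M)"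
  shows "AE x in M. g x = 0"
proof -
  have "(\<integral>\<^sup>+x. f x \<partial>M) + (\<integral>\<^sup>+x. g x \<partial>M) = (\<integral>\<^sup>+x. f x \<partial>M) + 0"
    using assms(4) by (simp add: nn_integral_add)
  then have "(\<integral>\<^sup>+x. g x \<partial>M) = 0" using assms(3) by (subst (asm) ennreal_add_left_cancel) auto
  then show ?thesis by (simp add: nn_integral_0_iff_AE)
qed

lemma merger_rate_eq_if_Delta_sym:
  assumes AE: "AE \<zeta> in \<Xi>. \<zeta> \<in> Delta_sym"
    and pos: "\<forall>k\<in>set ks. 0 < k" "\<forall>k\<in>set ks'. 0 < k"
    and eq: "sum_list ks = sum_list ks'" "length ks = length ks'"
  shows "merger_rate \<Xi> ks = merger_rate \<Xi> ks'"
proof -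
  let ?U = "UNIV - {\<lambda>_. 0}"
  let ?I = "\<lambda>ks. rate_integrand (filter (\<lambda>k. 2 \<le> k) ks) (length (filter (\<lambda>k. k = 1) ks))"
  have "AE \<zeta> in \<Xi>. ?I ks \<zeta> * indicator ?U \<zeta> = ?I ks' \<zeta> * indicator ?U \<zeta>"
    using AE
  proof eventually_elim
    case (elim \<zeta>)
    then obtain k where \<zeta>: "\<zeta> = xi k" unfolding Delta_sym_def by auto
    show ?case
    proof (cases "k = 0")
      case True
      then show ?thesis by (simp add: \<zeta> xi_0)
    next
      case False
      then have "0 < k" by simp
      then show ?thesis
        by (simp only: \<zeta> rate_integrand_merger_xi[OF _ pos(1)] rate_integrand_merger_xi[OF _ pos(2)] eq)
    qed
  qed
  then have "(\<integral>\<^sup>+\<zeta>\<in>?U. ?I ks \<zeta> \<partial>\<Xi>) = (\<integral>\<^sup>+\<zeta>\<in>?U. ?I ks' \<zeta> \<partial>\<Xi>)"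
    by (rule nn_integral_cong_AE)
  moreover have "filter (\<lambda>k. 2 \<le> k) ks = [2] \<longleftrightarrow> filter (\<lambda>k. 2 \<le> k) ks' = [2]"
    using filter_ge_2_eq_2_iff[OF pos(1)] filter_ge_2_eq_2_iff[OF pos(2)] eq by simp
  ultimately show ?thesis
    unfolding merger_rate_def rate_eq_rate_integrand by simp
qed

lemma symmetric_coalescent_if_Delta_sym:
  assumes "AE \<zeta> in \<Xi>. \<zeta> \<in> Delta_sym"
  shows "symmetric_coalescent \<Xi>"
  unfolding symmetric_coalescent_def using merger_rate_eq_if_Delta_sym[OF assms] by metis

lemma Delta_sym_if_symmetric_coalescent:
  assumes sets: "sets \<Xi> = sets borel" and "finite_measure \<Xi>"
    and Delta: "AE \<zeta> in \<Xi>. \<zeta> \<in> Delta" and sym: "symmetric_coalescent \<Xi>"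
  shows "AE \<zeta> in \<Xi>. \<zeta> \<in> Delta_sym"
proof -
  let ?U = "UNIV - {(\<lambda>_. 0) :: nat \<Rightarrow> real}"
  define f g where "f \<zeta> = ennreal (density_2_2 \<zeta>) * indicator ?U \<zeta>"
    and "g \<zeta> = ennreal (density_gap \<zeta>) * indicator ?U \<zeta>" for \<zeta>
  have [measurable]: "f \<in> borel_measurable \<Xi>" "g \<in> borel_measurable \<Xi>"
    unfolding f_def g_def measurable_cong_sets[OF sets refl] by measurable
  have "rate_integrand [3] 1 \<zeta> * indicator ?U \<zeta> = f \<zeta> + g \<zeta>"
    and "rate_integrand [2, 2] 0 \<zeta> * indicator ?U \<zeta> = f \<zeta>"
    and "f \<zeta> \<le> 1" if "\<zeta> \<in> Delta" for \<zeta>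
    using rate_integrand_3_1[OF that] rate_integrand_2_2[OF that] density_2_2_le_1[OF that]
    by (cases "\<zeta> = (\<lambda>_. 0)"; simp add: f_def g_def distrib_right)+
  then have pointwise: "AE \<zeta> in \<Xi>. rate_integrand [3] 1 \<zeta> * indicator ?U \<zeta> = f \<zeta> + g \<zeta>"
    "AE \<zeta> in \<Xi>. rate_integrand [2, 2] 0 \<zeta> * indicator ?U \<zeta> = f \<zeta>"
    "AE \<zeta> in \<Xi>. f \<zeta> \<le> 1"
    using Delta by (auto elim!: eventually_mono)
  have "(\<integral>\<^sup>+\<zeta>\<in>?U. rate_integrand [3] 1 \<zeta> \<partial>\<Xi>) = merger_rate \<Xi> [3, 1]"
    by (simp add: merger_rate_def rate_eq_rate_integrand One_nat_def)
  also have "\<dots> = merger_rate \<Xi> [2, 2]"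
    using sym[unfolded symmetric_coalescent_def, rule_format, of 4 2 "[3, 1]" "[2, 2]"] by force
  also have "\<dots> = (\<integral>\<^sup>+\<zeta>\<in>?U. rate_integrand [2, 2] 0 \<zeta> \<partial>\<Xi>)"
    by (simp add: merger_rate_def rate_eq_rate_integrand)
  finally have "(\<integral>\<^sup>+\<zeta>. f \<zeta> + g \<zeta> \<partial>\<Xi>) = (\<integral>\<^sup>+\<zeta>. f \<zeta> \<partial>\<Xi>)"
    by (simp only: nn_integral_cong_AE[OF pointwise(1)] nn_integral_cong_AE[OF pointwise(2)])
  moreover have "(\<integral>\<^sup>+\<zeta>. f \<zeta> \<partial>\<Xi>) \<noteq> \<infinity>"
  proof -
    have "(\<integral>\<^sup>+\<zeta>. f \<zeta> \<partial>\<Xi>) \<le> (\<integral>\<^sup>+\<zeta>. 1 \<partial>\<Xi>)"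
      using pointwise(3) by (rule nn_integral_mono_AE)
    then show ?thesis
      using finite_measure.emeasure_finite[OF \<open>finite_measure \<Xi>\<close>, of "space \<Xi>"] by (auto simp: top_unique)
  qed
  ultimately have "AE \<zeta> in \<Xi>. g \<zeta> = 0"
    by (intro AE_eq_0_if_nn_integral_add_eq) auto
  then show ?thesis
    using Delta
  proof eventually_elim
    case (elim \<zeta>)
    show ?case
    proof (cases "\<zeta> = (\<lambda>_. 0)")
      case True
      then show ?thesis using xi_0 unfolding Delta_sym_def by (metis rangeI)
    next
      case False
      then show ?thesis using elim by (intro Delta_sym_if_density_gap_le_0) (auto simp: g_def)
    qed
  qed
qed

lemma weights_of_finite_measure:
  fixes \<Xi> :: "(nat \<Rightarrow> real) measure"
  assumes "sets \<Xi> = sets borel" and "finite_measure \<Xi>"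
  obtains F :: "nat measure" where "sets F = sets (count_space UNIV)" and "emeasure F {0} < \<infinity>"
    and "(\<Sum>k. emeasure F {Suc k} / of_nat (Suc k)) < \<infinity>"
    and "\<forall>k. 0 < k \<longrightarrow> emeasure \<Xi> {xi k} = emeasure F {k} / of_nat k"
    and "emeasure \<Xi> {xi 0} = emeasure F {0}"
proof
  define f where "f k = (if k = 0 then emeasure \<Xi> {xi 0} else of_nat k * emeasure \<Xi> {xi k})" for k
  define F where "F = density (count_space (UNIV :: nat set)) f"
  have fin: "emeasure \<Xi> A < \<infinity>" for A
    using finite_measure.emeasure_finite[OF assms(2)] by (simp add: less_top)
  have F_singleton: "emeasure F {k} = f k" for k
    unfolding F_def by (subst emeasure_density) auto
  show "sets F = sets (count_space UNIV)" by (simp add: F_def)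
  show "emeasure F {0} < \<infinity>" "emeasure \<Xi> {xi 0} = emeasure F {0}"
    using fin by (simp_all add: F_singleton f_def)
  show div: "\<forall>k. 0 < k \<longrightarrow> emeasure \<Xi> {xi k} = emeasure F {k} / of_nat k"
  proof (intro allI impI)
    fix k :: nat assume "0 < k"
    then show "emeasure \<Xi> {xi k} = emeasure F {k} / of_nat k"
      by (simp add: F_singleton f_def mult.commute[of "of_nat k"] ennreal_mult_divide_eq)
  qed
  have "(\<Sum>k. emeasure F {Suc k} / of_nat (Suc k)) = (\<Sum>k. emeasure \<Xi> {xi (Suc k)})"
    using div by simp
  also have "\<dots> = emeasure \<Xi> (\<Union>k. {xi (Suc k)})"
    using assms(1) inj_xi
    by (intro suminf_emeasure) (auto simp: disjoint_family_on_def dest: injD)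
  finally show "(\<Sum>k. emeasure F {Suc k} / of_nat (Suc k)) < \<infinity>" using fin by simp
qed

theorem theorem1:
  fixes \<Xi> :: "(nat \<Rightarrow> real) measure"
  assumes "sets \<Xi> = sets borel"
    and "finite_measure \<Xi>"
    and "emeasure \<Xi> (UNIV - Delta) = 0"
  shows "symmetric_coalescent \<Xi> \<longleftrightarrow>
    (\<exists>F :: nat measure. sets F = sets (count_space UNIV) \<and>
       emeasure F {0} < \<infinity> \<and>
       (\<Sum>k. emeasure F {Suc k} / of_nat (Suc k)) < \<infinity> \<and>
       emeasure \<Xi> (UNIV - Delta_sym) = 0 \<and>
       (\<forall>k. 0 < k \<longrightarrow> emeasure \<Xi> {xi k} = emeasure F {k} / of_nat k) \<and>
       emeasure \<Xi> {xi 0} = emeasure F {0})"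
proof -
  have Delta: "AE \<zeta> in \<Xi>. \<zeta> \<in> Delta"
    using assms(3) emeasure_compl_eq_0_iff_AE[OF assms(1) Delta_in_borel] by simp
  have "symmetric_coalescent \<Xi> \<longleftrightarrow> emeasure \<Xi> (UNIV - Delta_sym) = 0"
    unfolding emeasure_compl_eq_0_iff_AE[OF assms(1) Delta_sym_in_borel]
    using Delta_sym_if_symmetric_coalescent[OF assms(1,2) Delta] symmetric_coalescent_if_Delta_sym
    by blast
  moreover obtain F :: "nat measure" where "sets F = sets (count_space UNIV)" "emeasure F {0} < \<infinity>"
    "(\<Sum>k. emeasure F {Suc k} / of_nat (Suc k)) < \<infinity>"
    "\<forall>k. 0 < k \<longrightarrow> emeasure \<Xi> {xi k} = emeasure F {k} / of_nat k" "emeasure \<Xi> {xi 0} = emeasure F {0}"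
    by (rule weights_of_finite_measure[OF assms(1,2)])
  ultimately show ?thesis by blast
qed

end
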